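(* Let $(\mathcal A,\Delta)$ be a weak bigraded Batalin-Vilkovisky algebra with bigraded Gerstenhaber bracket $[\cdot,\cdot]$ generated by $\Delta$, and let $\delta$ be an $R$-linear operator on $\mathcal A$ of bidegree $(1,0)$ which is a derivation of degree $1$ of the bigraded $R$-algebra $\mathcal A$. Then the following are equivalent: (i) $\delta[x,y]=[\delta x,y]-(-1)^{|x|}[x,\delta y]$ for all homogeneous $x,y\in\mathcal A$; (ii) the graded commutator $[\delta,\Delta]=\delta\Delta+\Delta\delta$ is a derivation of degree $0$ of the bigraded algebra $\mathcal A$, i.e. $[\delta,\Delta](ab)=([\delta,\Delta]a)b+a([\delta,\Delta]b)$ for all $a,b\in\mathcal A$.
   Context: $R$ is a commutative ring. A bigraded Gerstenhaber algebra is a bigraded commutative $R$-algebra $\mathcal A$ (signs governed by the total degree $|\cdot|$, the sum of the two degrees) with an $R$-bilinear bracket of bidegree $(0,-1)$ which becomes a bigraded Lie bracket when the second degree is lowered by one, such that for $a$ of bidegree $(p,q)$, $[a,\cdot]$ is a derivation of bidegree $(p,q-1)$. An $R$-linear operator $\Delta$ of bidegree $(0,-1)$ generates the bracket if $[a,b]=(-1)^{|a|}\big(\Delta(ab)-(\Delta a)b-(-1)^{|a|}a(\Delta b)\big)$ for all homogeneous $a,b$. A weak bigraded Batalin-Vilkovisky algebra is a bigraded Gerstenhaber algebra together with such a generator. *)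

theory Defs
  imports Complex_Main
begin

definition sgnp :: "int \<Rightarrow> 'a::ab_group_add \<Rightarrow> 'a" where
  "sgnp k x = (if even k then x else - x)"

definition r_linear :: "('r::comm_ring_1 \<Rightarrow> 'a::ab_group_add \<Rightarrow> 'a) \<Rightarrow> ('a \<Rightarrow> 'a) \<Rightarrow> bool" where
  "r_linear scale f \<longleftrightarrow> (\<forall>x y. f (x + y) = f x + f y) \<and> (\<forall>r x. f (scale r x) = scale r (f x))"

text \<open>A bigraded R-module: the whole type is the direct sum of the submodules G p q.\<close>
definition bigraded_module :: "('r::comm_ring_1 \<Rightarrow> 'a::ab_group_add \<Rightarrow> 'a) \<Rightarrow> (int \<Rightarrow> int \<Rightarrow> 'a set) \<Rightarrow> bool" where
  "bigraded_module scale G \<longleftrightarrow>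
     module scale \<and>
     (\<forall>p q. 0 \<in> G p q \<and> (\<forall>x\<in>G p q. \<forall>y\<in>G p q. x + y \<in> G p q) \<and> (\<forall>r. \<forall>x\<in>G p q. scale r x \<in> G p q)) \<and>
     (\<forall>x. \<exists>S c. finite S \<and> (\<forall>pq\<in>S. c pq \<in> G (fst pq) (snd pq)) \<and> x = sum c S) \<and>
     (\<forall>S c. finite S \<and> (\<forall>pq\<in>S. c pq \<in> G (fst pq) (snd pq)) \<and> sum c S = 0
            \<longrightarrow> (\<forall>pq\<in>S. c pq = 0))"

text \<open>A bigraded commutative R-algebra (associative multiplication of the ring type),
  signs governed by the total degree p+q.\<close>
definition bigraded_comm_algebra :: "('r::comm_ring_1 \<Rightarrow> 'a::ring \<Rightarrow> 'a) \<Rightarrow> (int \<Rightarrow> int \<Rightarrow> 'a set) \<Rightarrow> bool" where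
  "bigraded_comm_algebra scale G \<longleftrightarrow>
     bigraded_module scale G \<and>
     (\<forall>r a b. scale r (a * b) = scale r a * b \<and> scale r (a * b) = a * scale r b) \<and>
     (\<forall>p q p' q' a b. a \<in> G p q \<longrightarrow> b \<in> G p' q' \<longrightarrow> a * b \<in> G (p + p') (q + q')) \<and>
     (\<forall>p q p' q' a b. a \<in> G p q \<longrightarrow> b \<in> G p' q' \<longrightarrow> a * b = sgnp ((p + q) * (p' + q')) (b * a))"

text \<open>A bigraded Gerstenhaber algebra: bracket of bidegree (0,-1), R-bilinear, a bigraded Lie
  bracket after lowering the second degree by one, and [a,-] a derivation of bidegree (p,q-1).\<close>
definition bigraded_gerstenhaber :: "('r::comm_ring_1 \<Rightarrow> 'a::ring \<Rightarrow> 'a) \<Rightarrow> (int \<Rightarrow> int \<Rightarrow> 'a set)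
     \<Rightarrow> ('a \<Rightarrow> 'a \<Rightarrow> 'a) \<Rightarrow> bool" where
  "bigraded_gerstenhaber scale G br \<longleftrightarrow>
     bigraded_comm_algebra scale G \<and>
     (\<forall>a. r_linear scale (br a)) \<and> (\<forall>b. r_linear scale (\<lambda>a. br a b)) \<and>
     (\<forall>p q p' q' a b. a \<in> G p q \<longrightarrow> b \<in> G p' q' \<longrightarrow> br a b \<in> G (p + p') (q + q' - 1)) \<and>
     (\<forall>p q p' q' a b. a \<in> G p q \<longrightarrow> b \<in> G p' q' \<longrightarrow>
        br a b = - sgnp ((p + q - 1) * (p' + q' - 1)) (br b a)) \<and>
     (\<forall>p q p' q' p'' q'' a b c. a \<in> G p q \<longrightarrow> b \<in> G p' q' \<longrightarrow> c \<in> G p'' q'' \<longrightarrow>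
        br a (br b c) = br (br a b) c + sgnp ((p + q - 1) * (p' + q' - 1)) (br b (br a c))) \<and>
     (\<forall>p q p' q' a b c. a \<in> G p q \<longrightarrow> b \<in> G p' q' \<longrightarrow>
        br a (b * c) = br a b * c + sgnp ((p + q - 1) * (p' + q')) (b * br a c))"

definition generates_bracket :: "(int \<Rightarrow> int \<Rightarrow> 'a::ring set) \<Rightarrow> ('a \<Rightarrow> 'a \<Rightarrow> 'a) \<Rightarrow> ('a \<Rightarrow> 'a) \<Rightarrow> bool" where
  "generates_bracket G br \<Delta> \<longleftrightarrow>
     (\<forall>p q p' q' a b. a \<in> G p q \<longrightarrow> b \<in> G p' q' \<longrightarrow>
        br a b = sgnp (p + q) (\<Delta> (a * b) - \<Delta> a * b - sgnp (p + q) (a * \<Delta> b)))"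

definition weak_bigraded_BV :: "('r::comm_ring_1 \<Rightarrow> 'a::ring \<Rightarrow> 'a) \<Rightarrow> (int \<Rightarrow> int \<Rightarrow> 'a set)
     \<Rightarrow> ('a \<Rightarrow> 'a \<Rightarrow> 'a) \<Rightarrow> ('a \<Rightarrow> 'a) \<Rightarrow> bool" where
  "weak_bigraded_BV scale G br \<Delta> \<longleftrightarrow>
     bigraded_gerstenhaber scale G br \<and>
     r_linear scale \<Delta> \<and>
     (\<forall>p q a. a \<in> G p q \<longrightarrow> \<Delta> a \<in> G p (q - 1)) \<and>
     generates_bracket G br \<Delta>"

end

theory Submission
  imports Defs
begin

text \<open>For homogeneous \<open>a\<close> of total degree \<open>n\<close>, expanding \<open>\<Delta>\<close> of products through the
  bracket it generates and \<open>\<delta>\<close> of products through its Leibniz rule shows that the failure of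
  \<open>[\<delta>,\<Delta>]\<close> to be a derivation on \<open>a, b\<close> is
  \<open>(-1)\<^sup>n (\<delta>[a,b] - [\<delta>a,b] + (-1)\<^sup>n [a,\<delta>b])\<close>.
  Hence (i) says exactly that this biadditive defect vanishes on homogeneous pairs, and since every
  element is a finite sum of homogeneous ones, that it vanishes identically, which is (ii).\<close>

lemma sgnp_even [simp]: "even k \<Longrightarrow> sgnp k x = x"
  by (simp add: sgnp_def)

lemma sgnp_odd [simp]: "odd k \<Longrightarrow> sgnp k x = - x"
  by (simp add: sgnp_def)

lemma sgnp_eq_0_iff [simp]: "sgnp k x = 0 \<longleftrightarrow> x = 0"
  by (simp add: sgnp_def)

lemma r_linear_imp_additive: "r_linear scale f \<Longrightarrow> additive f"
  by (simp add: r_linear_def additive_def)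

definition derivation_defect :: "('a::ring \<Rightarrow> 'a) \<Rightarrow> 'a \<Rightarrow> 'a \<Rightarrow> 'a" where
  "derivation_defect D a b = D (a * b) - (D a * b + a * D b)"

lemma additive_derivation_defect_left:
  "additive D \<Longrightarrow> additive (\<lambda>a. derivation_defect D a b)"
  by (simp add: additive_def derivation_defect_def algebra_simps)

lemma additive_derivation_defect_right:
  "additive D \<Longrightarrow> additive (\<lambda>b. derivation_defect D a b)"
  by (simp add: additive_def derivation_defect_def algebra_simps)

lemma additive_graded_commutator:
  "additive \<delta> \<Longrightarrow> additive \<Delta> \<Longrightarrow> additive (\<lambda>x. \<delta> (\<Delta> x) + \<Delta> (\<delta> x))"
  by (simp add: additive_def)

lemma generated_bracket_solve_mult:
  "br a b = sgnp n (\<Delta> (a * b) - \<Delta> a * b - sgnp n (a * \<Delta> b)) \<Longrightarrow>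
   \<Delta> (a * b) = sgnp n (br a b) + \<Delta> a * b + sgnp n (a * \<Delta> b)"
  by (cases "even n") (simp_all add: algebra_simps)

text \<open>Here \<open>n\<close> stands for the total degree of \<open>a\<close>, so that \<open>\<delta> a\<close> and \<open>\<Delta> a\<close> have total
  degrees \<open>n + 1\<close> and \<open>n - 1\<close>.\<close>
lemma derivation_defect_graded_commutator:
  fixes \<delta> \<Delta> :: "'a::ring \<Rightarrow> 'a"
  assumes "additive \<delta>" "additive \<Delta>"
    and gen_ab: "br a b = sgnp n (\<Delta> (a * b) - \<Delta> a * b - sgnp n (a * \<Delta> b))"
    and gen_\<delta>a_b: "br (\<delta> a) b = sgnp (n + 1) (\<Delta> (\<delta> a * b) - \<Delta> (\<delta> a) * b - sgnp (n + 1) (\<delta> a * \<Delta> b))"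
    and gen_a_\<delta>b: "br a (\<delta> b) = sgnp n (\<Delta> (a * \<delta> b) - \<Delta> a * \<delta> b - sgnp n (a * \<Delta> (\<delta> b)))"
    and leibniz_ab: "\<delta> (a * b) = \<delta> a * b + sgnp n (a * \<delta> b)"
    and leibniz_\<Delta>a_b: "\<delta> (\<Delta> a * b) = \<delta> (\<Delta> a) * b + sgnp (n - 1) (\<Delta> a * \<delta> b)"
    and leibniz_a_\<Delta>b: "\<delta> (a * \<Delta> b) = \<delta> a * \<Delta> b + sgnp n (a * \<delta> (\<Delta> b))"
  shows "derivation_defect (\<lambda>x. \<delta> (\<Delta> x) + \<Delta> (\<delta> x)) a b
           = sgnp n (\<delta> (br a b) - br (\<delta> a) b + sgnp n (br a (\<delta> b)))"
proof -
  interpret \<delta>: additive \<delta> by fact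
  interpret \<Delta>: additive \<Delta> by fact
  note \<Delta>_ab = generated_bracket_solve_mult[where br = br and \<Delta> = \<Delta>, OF gen_ab]
  note \<Delta>_\<delta>a_b = generated_bracket_solve_mult[where br = br and \<Delta> = \<Delta>, OF gen_\<delta>a_b]
  note \<Delta>_a_\<delta>b = generated_bracket_solve_mult[where br = br and \<Delta> = \<Delta>, OF gen_a_\<delta>b]
  show ?thesis
    by (cases "even n")
      (simp_all add: derivation_defect_def \<Delta>_ab \<Delta>_\<delta>a_b \<Delta>_a_\<delta>b leibniz_ab leibniz_\<Delta>a_b
        leibniz_a_\<Delta>b \<delta>.add \<delta>.minus \<delta>.diff \<Delta>.add \<Delta>.minus \<Delta>.diff algebra_simps)
qed

lemma weak_bigraded_BV_derivation_defect_commutator: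
  assumes BV: "weak_bigraded_BV scale G br \<Delta>" and "additive \<delta>"
    and bideg: "\<And>p q a. a \<in> G p q \<Longrightarrow> \<delta> a \<in> G (p + 1) q"
    and leibniz: "\<And>p q a b. a \<in> G p q \<Longrightarrow> \<delta> (a * b) = \<delta> a * b + sgnp (p + q) (a * \<delta> b)"
    and a: "a \<in> G p q" and b: "b \<in> G p' q'"
  shows "derivation_defect (\<lambda>x. \<delta> (\<Delta> x) + \<Delta> (\<delta> x)) a b
           = sgnp (p + q) (\<delta> (br a b) - br (\<delta> a) b + sgnp (p + q) (br a (\<delta> b)))"
proof -
  have "additive \<Delta>"
    using BV r_linear_imp_additive by (auto simp: weak_bigraded_BV_def)
  have \<Delta>_bideg: "\<And>p q a. a \<in> G p q \<Longrightarrow> \<Delta> a \<in> G p (q - 1)"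
    using BV by (simp add: weak_bigraded_BV_def)
  have gen: "\<And>p q p' q' a b. a \<in> G p q \<Longrightarrow> b \<in> G p' q' \<Longrightarrow>
      br a b = sgnp (p + q) (\<Delta> (a * b) - \<Delta> a * b - sgnp (p + q) (a * \<Delta> b))"
    using BV by (simp add: weak_bigraded_BV_def generates_bracket_def)
  show ?thesis
  proof (rule derivation_defect_graded_commutator[OF \<open>additive \<delta>\<close> \<open>additive \<Delta>\<close>])
    show "br a b = sgnp (p + q) (\<Delta> (a * b) - \<Delta> a * b - sgnp (p + q) (a * \<Delta> b))"
      using gen[OF a b] .
    show "br (\<delta> a) b = sgnp (p + q + 1)
        (\<Delta> (\<delta> a * b) - \<Delta> (\<delta> a) * b - sgnp (p + q + 1) (\<delta> a * \<Delta> b))"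
      using gen[OF bideg[OF a] b] by (simp add: add.commute add.left_commute)
    show "br a (\<delta> b) = sgnp (p + q) (\<Delta> (a * \<delta> b) - \<Delta> a * \<delta> b - sgnp (p + q) (a * \<Delta> (\<delta> b)))"
      using gen[OF a bideg[OF b]] .
    show "\<delta> (a * b) = \<delta> a * b + sgnp (p + q) (a * \<delta> b)"
      using leibniz[OF a] .
    show "\<delta> (\<Delta> a * b) = \<delta> (\<Delta> a) * b + sgnp (p + q - 1) (\<Delta> a * \<delta> b)"
      using leibniz[OF \<Delta>_bideg[OF a]] by (simp add: add_diff_eq)
    show "\<delta> (a * \<Delta> b) = \<delta> a * \<Delta> b + sgnp (p + q) (a * \<delta> (\<Delta> b))"
      using leibniz[OF a] .
  qed
qed

lemma bigraded_module_homogeneous_decomposition: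
  assumes "bigraded_module scale G"
  obtains S c where "finite S" "\<forall>pq\<in>S. c pq \<in> G (fst pq) (snd pq)" "x = sum c S"
proof -
  have "\<forall>x. \<exists>S c. finite S \<and> (\<forall>pq\<in>S. c pq \<in> G (fst pq) (snd pq)) \<and> x = sum c S"
    using assms unfolding bigraded_module_def by (elim conjE)
  then show ?thesis
    using that by blast
qed

lemma additive_eq_0_if_eq_0_on_homogeneous:
  assumes "bigraded_module scale G" "additive f"
    and "\<And>p q x. x \<in> G p q \<Longrightarrow> f x = 0"
  shows "f x = 0"
proof -
  obtain S c where "finite S" and homogeneous: "\<forall>pq\<in>S. c pq \<in> G (fst pq) (snd pq)"
    and "x = sum c S"
    using bigraded_module_homogeneous_decomposition[OF assms(1)] .
  then have "f x = (\<Sum>pq\<in>S. f (c pq))"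
    using additive.sum[OF assms(2)] by simp
  also have "\<dots> = 0"
    using homogeneous assms(3) by (intro sum.neutral) blast
  finally show ?thesis .
qed

lemma biadditive_eq_0_if_eq_0_on_homogeneous:
  assumes "bigraded_module scale G"
    and "\<And>b. additive (\<lambda>a. F a b)" "\<And>a. additive (\<lambda>b. F a b)"
    and "\<And>p q p' q' a b. a \<in> G p q \<Longrightarrow> b \<in> G p' q' \<Longrightarrow> F a b = 0"
  shows "F a b = 0"
proof -
  have "F a b = 0" if "a \<in> G p q" for a p q
    using additive_eq_0_if_eq_0_on_homogeneous[OF assms(1,3)] assms(4) that by blast
  then show ?thesis
    using additive_eq_0_if_eq_0_on_homogeneous[OF assms(1,2)] by blast
qed

theorem lemma5p4p2:
  fixes scale :: "'r::comm_ring_1 \<Rightarrow> 'a::ring \<Rightarrow> 'a"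
    and G :: "int \<Rightarrow> int \<Rightarrow> 'a set"
    and br :: "'a \<Rightarrow> 'a \<Rightarrow> 'a"
    and \<Delta> \<delta> :: "'a \<Rightarrow> 'a"
  assumes BV: "weak_bigraded_BV scale G br \<Delta>"
    and lin: "r_linear scale \<delta>"
    and bideg: "\<forall>p q a. a \<in> G p q \<longrightarrow> \<delta> a \<in> G (p + 1) q"
    and der: "\<forall>p q a b. a \<in> G p q \<longrightarrow> \<delta> (a * b) = \<delta> a * b + sgnp (p + q) (a * \<delta> b)"
  shows "(\<forall>p q p' q' x y. x \<in> G p q \<longrightarrow> y \<in> G p' q' \<longrightarrow>
            \<delta> (br x y) = br (\<delta> x) y - sgnp (p + q) (br x (\<delta> y)))
     \<longleftrightarrow> (\<forall>a b. (\<delta> (\<Delta> (a * b)) + \<Delta> (\<delta> (a * b)))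
                 = (\<delta> (\<Delta> a) + \<Delta> (\<delta> a)) * b + a * (\<delta> (\<Delta> b) + \<Delta> (\<delta> b)))"
proof -
  have module: "bigraded_module scale G"
    using BV by (simp add: weak_bigraded_BV_def bigraded_gerstenhaber_def bigraded_comm_algebra_def)
  have "additive \<delta>" "additive \<Delta>"
    using lin BV r_linear_imp_additive by (auto simp: weak_bigraded_BV_def)
  let ?D = "\<lambda>x. \<delta> (\<Delta> x) + \<Delta> (\<delta> x)"
  note defect = weak_bigraded_BV_derivation_defect_commutator[OF BV \<open>additive \<delta>\<close>
      bideg[rule_format] der[rule_format]]
  have "(\<forall>p q p' q' x y. x \<in> G p q \<longrightarrow> y \<in> G p' q' \<longrightarrow>
            \<delta> (br x y) = br (\<delta> x) y - sgnp (p + q) (br x (\<delta> y)))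
      \<longleftrightarrow> (\<forall>p q p' q' a b. a \<in> G p q \<longrightarrow> b \<in> G p' q' \<longrightarrow> derivation_defect ?D a b = 0)"
    using defect by (simp add: diff_add_eq eq_diff_eq)
  also have "\<dots> \<longleftrightarrow> (\<forall>a b. derivation_defect ?D a b = 0)"
    using biadditive_eq_0_if_eq_0_on_homogeneous[OF module
        additive_derivation_defect_left additive_derivation_defect_right]
      additive_graded_commutator[OF \<open>additive \<delta>\<close> \<open>additive \<Delta>\<close>]
    by blast
  finally show ?thesis
    by (simp add: derivation_defect_def)
qed

end
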